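(* Let $p\ge 2$, $\alpha=p-1$, $0<R<\infty$, $\theta\ge\alpha$, $0\le\nu<\lambda_{\alpha,\theta}$. For each $\varepsilon\in(0,\mu_{\alpha,\theta})$ let $u_\varepsilon\in X^{1,p}_R(\alpha,\theta)\cap C^1[0,R]$ be nonnegative and nonincreasing with $H_\nu(u_\varepsilon)=1$ and $\int_0^R e^{\mu_\varepsilon u_\varepsilon^{p/(p-1)}}\mathrm d\lambda_\theta=S_\varepsilon(p,\nu,\theta,R)$, and let $\lambda_\varepsilon=\int_0^R e^{\mu_\varepsilon u_\varepsilon^{p/(p-1)}}u_\varepsilon^{p/(p-1)}\mathrm d\lambda_\theta$. Suppose that along a sequence $\varepsilon\to0$ we have $u_\varepsilon\to0$ in $L^q_\theta$ for every $q>1$ and $a_\varepsilon:=u_\varepsilon(0)\to+\infty$. Define $r_\varepsilon>0$ by $$r_\varepsilon^{\theta+1}=\frac{\lambda_\varepsilon}{a_\varepsilon^{\frac p{p-1}}e^{\mu_\varepsilon a_\varepsilon^{\frac p{p-1}}}}.$$ Then for every $\eta<\mu_{\alpha,\theta}$, $r_\varepsilon^{\theta+1}a_\varepsilon^{\frac p{p-1}}e^{\eta a_\varepsilon^{\frac p{p-1}}}\to0$ as $\varepsilon\to0$. In particular $r_\varepsilon^{\theta+1}\to0$.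
   Context: For $s\ge 0$ let $\omega_s=\frac{2\pi^{s/2}}{\Gamma(s/2)}$ and let $\mathrm d\lambda_s=\omega_s r^s\,\mathrm dr$ on $(0,R)$; $L^q_s=L^q((0,R),\mathrm d\lambda_s)$. The space $X^{1,p}_R(\alpha,\theta)$ is the completion of the set of all $u\in AC_{loc}(0,R)$ with $\lim_{r\to R}u(r)=0$, $u\in L^p_\theta$, $u'\in L^p_\alpha$, with respect to the norm $\|u\|=(\|u\|^p_{L^p_\theta}+\|u'\|^p_{L^p_\alpha})^{1/p}$. Set $\mu_{\alpha,\theta}=(\theta+1)\omega_\alpha^{1/\alpha}$, $\lambda_{\alpha,\theta}=\inf_{u\in X^{1,p}_R(\alpha,\theta)\setminus\{0\}}\|u'\|^p_{L^p_\alpha}/\|u\|^p_{L^p_\theta}$, and $H_\nu(u)=(\|u'\|^p_{L^p_\alpha}-\nu\|u\|^p_{L^p_\theta})^{1/p}$. Let $\mu_\varepsilon=\mu_{\alpha,\theta}-\varepsilon$ and $S_\varepsilon(p,\nu,\theta,R)=\sup_{u\in X^{1,p}_R(\alpha,\theta),\,H_\nu(u)\le1}\int_0^R e^{\mu_\varepsilon|u|^{p/(p-1)}}\mathrm d\lambda_\theta$. *)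

theory Defs
  imports "HOL-Analysis.Analysis"
begin

definition omega :: "real \<Rightarrow> real" where
  "omega s = 2 * pi powr (s / 2) / Gamma (s / 2)"

definition lam :: "real \<Rightarrow> real \<Rightarrow> real measure" where
  "lam s R = density (restrict_space lebesgue {0<..<R}) (\<lambda>r. ennreal (omega s * r powr s))"

definition Lpow :: "real \<Rightarrow> real \<Rightarrow> real \<Rightarrow> (real \<Rightarrow> real) \<Rightarrow> real" where
  "Lpow q s R u = integral\<^sup>L (lam s R) (\<lambda>r. \<bar>u r\<bar> powr q)"

definition abs_cont_on :: "real set \<Rightarrow> (real \<Rightarrow> real) \<Rightarrow> bool" where
  "abs_cont_on S f \<longleftrightarrow>
     (\<forall>e>0. \<exists>d>0. \<forall>(n::nat) (a::nat \<Rightarrow> real) (b::nat \<Rightarrow> real).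
        (\<forall>i<n. a i \<le> b i \<and> {a i..b i} \<subseteq> S) \<and>
        (\<forall>i<n. \<forall>j<n. i \<noteq> j \<longrightarrow> b i \<le> a j \<or> b j \<le> a i) \<and>
        (\<Sum>i<n. b i - a i) < d
        \<longrightarrow> (\<Sum>i<n. \<bar>f (b i) - f (a i)\<bar>) < e)"

definition AC_loc :: "real \<Rightarrow> (real \<Rightarrow> real) \<Rightarrow> bool" where
  "AC_loc R u \<longleftrightarrow> (\<forall>a b. 0 < a \<longrightarrow> a \<le> b \<longrightarrow> b < R \<longrightarrow> abs_cont_on {a..b} u)"

text \<open>The space X^{1,p}_R(alpha,theta). The normed space of such functions is already
  complete, so it coincides with its completion. The derivative u' is
  the a.e. derivative \<open>deriv u\<close>.\<close>
definition Xsp :: "real \<Rightarrow> real \<Rightarrow> real \<Rightarrow> real \<Rightarrow> (real \<Rightarrow> real) set" where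
  "Xsp p \<alpha> \<theta> R = {u. AC_loc R u \<and> (u \<longlongrightarrow> 0) (at_left R) \<and>
      integrable (lam \<theta> R) (\<lambda>r. \<bar>u r\<bar> powr p) \<and>
      integrable (lam \<alpha> R) (\<lambda>r. \<bar>deriv u r\<bar> powr p)}"

definition mu :: "real \<Rightarrow> real \<Rightarrow> real" where
  "mu \<alpha> \<theta> = (\<theta> + 1) * omega \<alpha> powr (1 / \<alpha>)"

definition lambda1 :: "real \<Rightarrow> real \<Rightarrow> real \<Rightarrow> real \<Rightarrow> real" where
  "lambda1 p \<alpha> \<theta> R = Inf {Lpow p \<alpha> R (deriv u) / Lpow p \<theta> R u | u.
      u \<in> Xsp p \<alpha> \<theta> R \<and> (\<exists>r\<in>{0<..<R}. u r \<noteq> 0)}"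

definition H :: "real \<Rightarrow> real \<Rightarrow> real \<Rightarrow> real \<Rightarrow> real \<Rightarrow> (real \<Rightarrow> real) \<Rightarrow> real" where
  "H p \<alpha> \<theta> R \<nu> u = (Lpow p \<alpha> R (deriv u) - \<nu> * Lpow p \<theta> R u) powr (1 / p)"

definition S :: "real \<Rightarrow> real \<Rightarrow> real \<Rightarrow> real \<Rightarrow> real \<Rightarrow> ennreal" where
  "S p \<nu> \<theta> R \<epsilon> = (SUP u \<in> {u \<in> Xsp p (p - 1) \<theta> R. H p (p - 1) \<theta> R \<nu> u \<le> 1}.
      \<integral>\<^sup>+ r. ennreal (exp ((mu (p - 1) \<theta> - \<epsilon>) * \<bar>u r\<bar> powr (p / (p - 1)))) \<partial>lam \<theta> R)"

end

theory Submission
  imports Defs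
begin

(* Write q = p/(p-1), m = mu - eps and a = u_eps(0), which tends to infinity. Then
   r^(theta+1) a^q e^(eta a^q) is the integral of e^(m u^q) u^q e^((eta - m) a^q), and as
   u <= a and eta <= m for small eps, it is at most the integral of u^q e^(eta u^q).
   Splitting at the level u^q = M bounds this by e^(|eta| M) times the integral of u^q, which
   tends to 0, plus O(1/M) times the integral of e^(c u^q) for a fixed c in (eta, mu); the
   latter is at most S_(mu - c) < infinity since u_eps is admissible for that supremum. *)

lemma mult_exp_le_linear_plus_exp:
  fixes \<eta> \<gamma> \<delta> :: real
  assumes \<gamma>: "0 < \<gamma>" and \<delta>: "0 < \<delta>"
  obtains C where "\<And>t. 0 \<le> t \<Longrightarrow> t * exp (\<eta> * t) \<le> C * t + \<delta> * exp ((\<eta> + \<gamma>) * t)"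
proof
  define M where "M = 4 / (\<gamma>\<^sup>2 * \<delta>)"
  fix t :: real
  assume t: "0 \<le> t"
  show "t * exp (\<eta> * t) \<le> exp (\<bar>\<eta>\<bar> * M) * t + \<delta> * exp ((\<eta> + \<gamma>) * t)"
  proof (cases "t \<le> M")
    case True
    have "\<eta> * t \<le> \<bar>\<eta>\<bar> * M"
      using True t by (meson abs_ge_self abs_ge_zero mult_mono order_trans)
    then have "t * exp (\<eta> * t) \<le> exp (\<bar>\<eta>\<bar> * M) * t"
      using t by (simp add: mult.commute mult_left_mono)
    moreover have "0 \<le> \<delta> * exp ((\<eta> + \<gamma>) * t)" using \<delta> by simp
    ultimately show ?thesis by linarith
  next
    case False
    have "(\<gamma> * t / 2)\<^sup>2 \<le> (1 + \<gamma> * t / 2)\<^sup>2"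
      using \<gamma> t by (intro power_mono) auto
    also have "\<dots> \<le> exp (\<gamma> * t)"
    proof -
      have "- 2 \<le> \<gamma> * t" using \<gamma> t by (smt (verit) mult_nonneg_nonneg)
      then show ?thesis using exp_ge_one_plus_x_over_n_power_n[of 2 "\<gamma> * t"] by simp
    qed
    finally have growth: "\<gamma>\<^sup>2 * t * t \<le> 4 * exp (\<gamma> * t)"
      by (simp add: power2_eq_square mult_ac)
    have "M * (\<gamma>\<^sup>2 * t) \<le> t * (\<gamma>\<^sup>2 * t)"
      using False t by (intro mult_right_mono) auto
    then have "4 * t \<le> \<delta> * (\<gamma>\<^sup>2 * t * t)"
      using \<gamma> \<delta> by (simp add: M_def field_simps)
    also have "\<dots> \<le> \<delta> * (4 * exp (\<gamma> * t))"
      using growth \<delta> by (intro mult_left_mono) auto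
    finally have "t \<le> \<delta> * exp (\<gamma> * t)" by simp
    then have "t * exp (\<eta> * t) \<le> \<delta> * exp (\<gamma> * t) * exp (\<eta> * t)"
      by (rule mult_right_mono) simp
    also have "\<dots> = \<delta> * exp ((\<eta> + \<gamma>) * t)"
      by (simp add: exp_add[symmetric] algebra_simps)
    finally show ?thesis using t by (simp add: add_increasing)
  qed
qed

lemma exp_shift_le:
  fixes s b \<eta> m :: real
  assumes "0 \<le> s" "s \<le> b" "\<eta> \<le> m"
  shows "exp (m * s) * s * exp ((\<eta> - m) * b) \<le> s * exp (\<eta> * s)"
proof -
  have "(\<eta> - m) * b \<le> (\<eta> - m) * s"
    using assms by (simp add: mult_left_mono_neg)
  then have "m * s + (\<eta> - m) * b \<le> \<eta> * s"
    by (simp add: algebra_simps)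
  then have "exp (m * s) * exp ((\<eta> - m) * b) \<le> exp (\<eta> * s)"
    by (simp add: exp_add[symmetric])
  then have "s * (exp (m * s) * exp ((\<eta> - m) * b)) \<le> s * exp (\<eta> * s)"
    using assms(1) by (rule mult_left_mono)
  then show ?thesis by (simp add: mult_ac)
qed

text \<open>For M = lam \<theta> R, q = p/(p-1), m = \<mu>_\<epsilon>, a = u_\<epsilon>(0) and v = u_\<epsilon> this is the
  paper's r_\<epsilon>^(\<theta>+1) = \<lambda>_\<epsilon> / (a^q e^(m a^q)).\<close>
definition blowup_scale :: "'a measure \<Rightarrow> real \<Rightarrow> real \<Rightarrow> real \<Rightarrow> ('a \<Rightarrow> real) \<Rightarrow> real" where
  "blowup_scale M q m a v =
     (\<integral>x. exp (m * v x powr q) * v x powr q \<partial>M) / (a powr q * exp (m * a powr q))"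

lemma blowup_scale_nonneg: "0 \<le> blowup_scale M q m a v"
  unfolding blowup_scale_def by (intro divide_nonneg_nonneg integral_nonneg) auto

lemma blowup_scale_mult_exp_le:
  fixes M :: "'a measure" and v :: "'a \<Rightarrow> real"
  assumes M: "finite_measure M" and v: "v \<in> borel_measurable M"
    and v_bounds: "\<And>x. x \<in> space M \<Longrightarrow> 0 \<le> v x \<and> v x \<le> a"
    and "0 < a" "0 < q" "\<eta> \<le> m"
  shows "blowup_scale M q m a v * a powr q * exp (\<eta> * a powr q)
           \<le> (\<integral>x. v x powr q * exp (\<eta> * v x powr q) \<partial>M)"
proof -
  interpret finite_measure M by (rule M)
  have "blowup_scale M q m a v * a powr q * exp (\<eta> * a powr q)
      = (\<integral>x. exp (m * v x powr q) * v x powr q \<partial>M) * exp ((\<eta> - m) * a powr q)"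
    using \<open>0 < a\<close> by (simp add: blowup_scale_def exp_diff left_diff_distrib field_simps)
  also have "\<dots> = (\<integral>x. exp (m * v x powr q) * v x powr q * exp ((\<eta> - m) * a powr q) \<partial>M)"
    by simp
  also have "\<dots> \<le> (\<integral>x. v x powr q * exp (\<eta> * v x powr q) \<partial>M)"
  proof (rule integral_mono')
    have "norm (v x powr q * exp (\<eta> * v x powr q)) \<le> a powr q * exp (\<bar>\<eta>\<bar> * a powr q)"
      if "x \<in> space M" for x
    proof -
      have le: "v x powr q \<le> a powr q"
        using v_bounds[OF that] \<open>0 < q\<close> by (simp add: powr_mono2)
      have "\<eta> * v x powr q \<le> \<bar>\<eta>\<bar> * a powr q"
        using le by (meson abs_ge_self abs_ge_zero order_trans mult_mono powr_ge_zero)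
      then show ?thesis
        using le by (simp add: mult_mono)
    qed
    then show "integrable M (\<lambda>x. v x powr q * exp (\<eta> * v x powr q))"
      using v by (intro integrable_const_bound AE_I2) auto
    show "exp (m * v x powr q) * v x powr q * exp ((\<eta> - m) * a powr q)
        \<le> v x powr q * exp (\<eta> * v x powr q)" if "x \<in> space M" for x
      using exp_shift_le[of "v x powr q" "a powr q" \<eta> m] v_bounds[OF that] assms(5,6)
      by (simp add: powr_mono2)
  qed simp
  finally show ?thesis .
qed

lemma integral_mult_exp_le:
  fixes M :: "'a measure" and v :: "'a \<Rightarrow> real"
  assumes M: "finite_measure M" and v: "v \<in> borel_measurable M"
    and v_bounds: "\<And>x. x \<in> space M \<Longrightarrow> 0 \<le> v x \<and> v x \<le> a"
    and "0 < q" "0 \<le> \<delta>"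
    and pointwise: "\<And>t. 0 \<le> t \<Longrightarrow> t * exp (\<eta> * t) \<le> C * t + \<delta> * exp (\<kappa> * t)"
  shows "(\<integral>x. v x powr q * exp (\<eta> * v x powr q) \<partial>M)
           \<le> C * (\<integral>x. \<bar>v x\<bar> powr q \<partial>M) + \<delta> * (\<integral>x. exp (\<kappa> * \<bar>v x\<bar> powr q) \<partial>M)"
proof -
  interpret finite_measure M by (rule M)
  have le: "\<bar>v x\<bar> powr q \<le> a powr q" if "x \<in> space M" for x
    using v_bounds[OF that] \<open>0 < q\<close> by (simp add: powr_mono2)
  have int_pow: "integrable M (\<lambda>x. \<bar>v x\<bar> powr q)"
    using v le by (intro integrable_const_bound[where B = "a powr q"] AE_I2) auto
  have "norm (exp (\<kappa> * \<bar>v x\<bar> powr q)) \<le> exp (\<bar>\<kappa>\<bar> * a powr q)" if "x \<in> space M" for x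
    using le[OF that] by (simp add: abs_ge_self abs_ge_zero mult_mono order_trans)
  then have int_exp: "integrable M (\<lambda>x. exp (\<kappa> * \<bar>v x\<bar> powr q))"
    using v by (intro integrable_const_bound AE_I2) auto
  have "(\<integral>x. v x powr q * exp (\<eta> * v x powr q) \<partial>M)
      \<le> (\<integral>x. C * \<bar>v x\<bar> powr q + \<delta> * exp (\<kappa> * \<bar>v x\<bar> powr q) \<partial>M)"
  proof (rule integral_mono')
    fix x assume x: "x \<in> space M"
    have "v x powr q * exp (\<eta> * v x powr q) \<le> C * \<bar>v x\<bar> powr q + \<delta> * exp (\<kappa> * \<bar>v x\<bar> powr q)"
      using pointwise[of "v x powr q"] v_bounds[OF x] by simp
    moreover have "0 \<le> v x powr q * exp (\<eta> * v x powr q)" by simp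
    ultimately show "0 \<le> C * \<bar>v x\<bar> powr q + \<delta> * exp (\<kappa> * \<bar>v x\<bar> powr q)"
      and "v x powr q * exp (\<eta> * v x powr q) \<le> C * \<bar>v x\<bar> powr q + \<delta> * exp (\<kappa> * \<bar>v x\<bar> powr q)"
      by linarith+
  qed (use int_pow int_exp in simp)
  also have "\<dots> = C * (\<integral>x. \<bar>v x\<bar> powr q \<partial>M) + \<delta> * (\<integral>x. exp (\<kappa> * \<bar>v x\<bar> powr q) \<partial>M)"
    using int_pow int_exp by simp
  finally show ?thesis .
qed

lemma tendsto_zero_if_eventually_le_vanishing_plus_small:
  fixes Q X :: "'a \<Rightarrow> real"
  assumes "\<forall>\<^sub>F n in F. 0 \<le> Q n" and X: "(X \<longlongrightarrow> 0) F"
    and bound: "\<And>\<delta>. 0 < \<delta> \<Longrightarrow> \<exists>C. \<forall>\<^sub>F n in F. Q n \<le> C * X n + \<delta>"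
  shows "(Q \<longlongrightarrow> 0) F"
proof (rule order_tendstoI)
  fix y :: real assume "y < 0"
  with assms(1) show "\<forall>\<^sub>F n in F. y < Q n"
    by (auto elim: eventually_mono)
next
  fix y :: real assume "0 < y"
  then obtain C where C: "\<forall>\<^sub>F n in F. Q n \<le> C * X n + y / 2"
    using bound[of "y / 2"] by auto
  have "((\<lambda>n. C * X n) \<longlongrightarrow> 0) F"
    using tendsto_mult_right_zero[OF X] by simp
  then have "\<forall>\<^sub>F n in F. C * X n < y / 2"
    using \<open>0 < y\<close> by (intro order_tendstoD(2)) auto
  with C show "\<forall>\<^sub>F n in F. Q n < y"
    by eventually_elim simp
qed

lemma tendsto_zero_if_mult_tendsto_zero:
  fixes s b :: "'a \<Rightarrow> real"
  assumes "((\<lambda>n. s n * b n) \<longlongrightarrow> 0) F" "\<forall>\<^sub>F n in F. 1 \<le> b n" "\<forall>\<^sub>F n in F. 0 \<le> s n"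
  shows "(s \<longlongrightarrow> 0) F"
proof (rule tendsto_sandwich[OF _ _ tendsto_const assms(1)])
  show "\<forall>\<^sub>F n in F. s n \<le> s n * b n"
    using assms(2,3) by eventually_elim (simp add: mult_le_cancel_left1)
qed (use assms(3) in simp)

locale concentrating_sequence =
  fixes M :: "'a measure" and v :: "nat \<Rightarrow> 'a \<Rightarrow> real" and a m :: "nat \<Rightarrow> real"
    and \<mu> q :: real
  assumes finite: "finite_measure M"
    and measurable: "\<And>n. v n \<in> borel_measurable M"
    and bounds: "\<And>n x. x \<in> space M \<Longrightarrow> 0 \<le> v n x \<and> v n x \<le> a n"
    and blowup: "filterlim a at_top sequentially"
    and exponent_tendsto: "m \<longlonglongrightarrow> \<mu>"
    and pos: "0 < \<mu>" "0 < q"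
    and vanishing: "(\<lambda>n. \<integral>x. \<bar>v n x\<bar> powr q \<partial>M) \<longlonglongrightarrow> 0"
    and exp_bounded: "\<And>c. 0 < c \<Longrightarrow> c < \<mu> \<Longrightarrow>
       \<exists>B\<ge>0. \<forall>n. (\<integral>\<^sup>+x. ennreal (exp (c * \<bar>v n x\<bar> powr q)) \<partial>M) \<le> ennreal B"
begin

lemma scale_mult_exp_tendsto_zero:
  assumes \<eta>: "\<eta> < \<mu>"
  shows "(\<lambda>n. blowup_scale M q (m n) (a n) (v n) * a n powr q * exp (\<eta> * a n powr q))
           \<longlonglongrightarrow> 0"
proof (rule tendsto_zero_if_eventually_le_vanishing_plus_small[OF _ vanishing])
  define c where "c = (max \<eta> 0 + \<mu>) / 2"
  have c: "0 < c" "c < \<mu>" "\<eta> < c"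
    using \<eta> pos by (auto simp: c_def)
  then obtain B where B: "0 \<le> B"
    and exp_le: "\<And>n. (\<integral>\<^sup>+x. ennreal (exp (c * \<bar>v n x\<bar> powr q)) \<partial>M) \<le> ennreal B"
    using exp_bounded by blast
  show "\<forall>\<^sub>F n in sequentially.
      0 \<le> blowup_scale M q (m n) (a n) (v n) * a n powr q * exp (\<eta> * a n powr q)"
    by (simp add: blowup_scale_nonneg)
  fix \<delta> :: real assume "0 < \<delta>"
  then obtain C where C: "\<And>t. 0 \<le> t \<Longrightarrow>
      t * exp (\<eta> * t) \<le> C * t + \<delta> / (B + 1) * exp (c * t)"
    using mult_exp_le_linear_plus_exp[of "c - \<eta>" "\<delta> / (B + 1)" \<eta>] c B by auto
  have "\<forall>\<^sub>F n in sequentially. 0 < a n"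
    using blowup by (simp add: filterlim_at_top_dense)
  moreover have "\<forall>\<^sub>F n in sequentially. \<eta> \<le> m n"
    using exponent_tendsto \<eta> by (intro order_tendstoD(1)[THEN eventually_mono]) auto
  ultimately have "\<forall>\<^sub>F n in sequentially.
      blowup_scale M q (m n) (a n) (v n) * a n powr q * exp (\<eta> * a n powr q)
        \<le> C * (\<integral>x. \<bar>v n x\<bar> powr q \<partial>M) + \<delta>"
  proof eventually_elim
    case (elim n)
    have "blowup_scale M q (m n) (a n) (v n) * a n powr q * exp (\<eta> * a n powr q)
        \<le> (\<integral>x. v n x powr q * exp (\<eta> * v n x powr q) \<partial>M)"
      using elim pos by (intro blowup_scale_mult_exp_le[OF finite measurable bounds])
    also have "\<dots> \<le> C * (\<integral>x. \<bar>v n x\<bar> powr q \<partial>M)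
        + \<delta> / (B + 1) * (\<integral>x. exp (c * \<bar>v n x\<bar> powr q) \<partial>M)"
      using C pos B \<open>0 < \<delta>\<close> by (intro integral_mult_exp_le[OF finite measurable bounds]) auto
    also have "\<dots> \<le> C * (\<integral>x. \<bar>v n x\<bar> powr q \<partial>M) + \<delta> / (B + 1) * B"
      using integral_real_bounded[OF B exp_le] B \<open>0 < \<delta>\<close>
      by (intro add_left_mono mult_left_mono) auto
    also have "\<dots> \<le> C * (\<integral>x. \<bar>v n x\<bar> powr q \<partial>M) + \<delta>"
      using B \<open>0 < \<delta>\<close> by (simp add: field_simps)
    finally show ?case .
  qed
  then show "\<exists>C. \<forall>\<^sub>F n in sequentially.
      blowup_scale M q (m n) (a n) (v n) * a n powr q * exp (\<eta> * a n powr q)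
        \<le> C * (\<integral>x. \<bar>v n x\<bar> powr q \<partial>M) + \<delta>" ..
qed

lemma scale_tendsto_zero: "(\<lambda>n. blowup_scale M q (m n) (a n) (v n)) \<longlonglongrightarrow> 0"
proof (rule tendsto_zero_if_mult_tendsto_zero)
  show "(\<lambda>n. blowup_scale M q (m n) (a n) (v n) * a n powr q) \<longlonglongrightarrow> 0"
    using scale_mult_exp_tendsto_zero[of 0] pos by simp
  have "\<forall>\<^sub>F n in sequentially. 1 \<le> a n"
    using blowup by (simp add: filterlim_at_top)
  then show "\<forall>\<^sub>F n in sequentially. 1 \<le> a n powr q"
    by eventually_elim (use pos in \<open>simp add: ge_one_powr_ge_zero\<close>)
qed (simp add: blowup_scale_nonneg)

end

lemma finite_measure_if_finite_nn_integral_ge_1: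
  assumes "(\<integral>\<^sup>+x. f x \<partial>M) < \<infinity>" and "\<And>x. x \<in> space M \<Longrightarrow> 1 \<le> f x"
  shows "finite_measure M"
proof
  have "emeasure M (space M) = (\<integral>\<^sup>+x. 1 \<partial>M)" by simp
  also have "\<dots> \<le> (\<integral>\<^sup>+x. f x \<partial>M)" using assms(2) by (rule nn_integral_mono)
  finally show "emeasure M (space M) \<noteq> \<infinity>" using assms(1) by auto
qed

lemma space_lam [simp]: "space (lam \<theta> R) = {0<..<R}"
  by (simp add: lam_def)

lemma borel_measurable_lam_if_continuous:
  assumes "continuous_on {0..R} f"
  shows "f \<in> borel_measurable (lam \<theta> R)"
proof -
  have "continuous_on {0<..<R} f"
    using assms by (rule continuous_on_subset) auto
  then have "f \<in> borel_measurable (lebesgue_on {0<..<R})"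
    by (rule continuous_imp_measurable_on_sets_lebesgue) simp
  then show ?thesis by (simp add: lam_def)
qed

lemma exp_integrals_bounded_by_S:
  assumes "\<And>n. v n \<in> Xsp p (p - 1) \<theta> R" and "\<And>n. H p (p - 1) \<theta> R \<nu> (v n) \<le> 1"
    and "S p \<nu> \<theta> R (mu (p - 1) \<theta> - c) < \<infinity>"
  shows "\<exists>B\<ge>0. \<forall>n.
    (\<integral>\<^sup>+r. ennreal (exp (c * \<bar>v n r\<bar> powr (p / (p - 1)))) \<partial>lam \<theta> R) \<le> ennreal B"
proof (intro exI conjI allI)
  fix n
  have "(\<integral>\<^sup>+r. ennreal (exp (c * \<bar>v n r\<bar> powr (p / (p - 1)))) \<partial>lam \<theta> R)
      \<le> S p \<nu> \<theta> R (mu (p - 1) \<theta> - c)"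
    unfolding S_def by (rule SUP_upper2[where i = "v n"]) (use assms in simp_all)
  also have "\<dots> = ennreal (enn2real (S p \<nu> \<theta> R (mu (p - 1) \<theta> - c)))"
    using assms(3) by (simp add: ennreal_enn2real less_top)
  finally show "(\<integral>\<^sup>+r. ennreal (exp (c * \<bar>v n r\<bar> powr (p / (p - 1)))) \<partial>lam \<theta> R)
      \<le> ennreal (enn2real (S p \<nu> \<theta> R (mu (p - 1) \<theta> - c)))" .
qed simp

theorem lemma3p3:
  fixes p R \<theta> \<nu> :: real
    and u :: "real \<Rightarrow> real \<Rightarrow> real"
    and e :: "nat \<Rightarrow> real"
  assumes hp: "p \<ge> 2"
    and hR: "0 < R"
    and htheta: "\<theta> \<ge> p - 1"
    and hnu: "0 \<le> \<nu>" "\<nu> < lambda1 p (p - 1) \<theta> R"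
    and hX: "\<And>\<epsilon>. 0 < \<epsilon> \<Longrightarrow> \<epsilon> < mu (p - 1) \<theta> \<Longrightarrow> u \<epsilon> \<in> Xsp p (p - 1) \<theta> R"
    and hC1: "\<And>\<epsilon>. 0 < \<epsilon> \<Longrightarrow> \<epsilon> < mu (p - 1) \<theta> \<Longrightarrow>
       \<exists>u'. continuous_on {0..R} u' \<and>
            (\<forall>r\<in>{0..R}. (u \<epsilon> has_real_derivative u' r) (at r within {0..R}))"
    and hnonneg: "\<And>\<epsilon> r. 0 < \<epsilon> \<Longrightarrow> \<epsilon> < mu (p - 1) \<theta> \<Longrightarrow> r \<in> {0..R} \<Longrightarrow> 0 \<le> u \<epsilon> r"
    and hnoninc: "\<And>\<epsilon> r s. 0 < \<epsilon> \<Longrightarrow> \<epsilon> < mu (p - 1) \<theta> \<Longrightarrow> 0 \<le> r \<Longrightarrow> r \<le> s \<Longrightarrow> s \<le> R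
       \<Longrightarrow> u \<epsilon> s \<le> u \<epsilon> r"
    and hH: "\<And>\<epsilon>. 0 < \<epsilon> \<Longrightarrow> \<epsilon> < mu (p - 1) \<theta> \<Longrightarrow> H p (p - 1) \<theta> R \<nu> (u \<epsilon>) = 1"
    and hmax: "\<And>\<epsilon>. 0 < \<epsilon> \<Longrightarrow> \<epsilon> < mu (p - 1) \<theta> \<Longrightarrow>
       (\<integral>\<^sup>+ r. ennreal (exp ((mu (p - 1) \<theta> - \<epsilon>) * \<bar>u \<epsilon> r\<bar> powr (p / (p - 1)))) \<partial>lam \<theta> R)
         = S p \<nu> \<theta> R \<epsilon>"
    and hSfin: "\<And>\<epsilon>. 0 < \<epsilon> \<Longrightarrow> \<epsilon> < mu (p - 1) \<theta> \<Longrightarrow> S p \<nu> \<theta> R \<epsilon> < \<infinity>"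
    and he: "\<And>n. 0 < e n" "\<And>n. e n < mu (p - 1) \<theta>" "e \<longlonglongrightarrow> 0"
    and hLq: "\<And>q. q > 1 \<Longrightarrow> (\<lambda>n. Lpow q \<theta> R (u (e n))) \<longlonglongrightarrow> 0"
    and hblow: "filterlim (\<lambda>n. u (e n) 0) at_top sequentially"
  shows "(\<forall>\<eta> < mu (p - 1) \<theta>.
      (\<lambda>n. let \<epsilon> = e n; a = u \<epsilon> 0;
               lam\<epsilon> = integral\<^sup>L (lam \<theta> R) (\<lambda>r. exp ((mu (p - 1) \<theta> - \<epsilon>) * u \<epsilon> r powr (p / (p - 1)))
                                           * u \<epsilon> r powr (p / (p - 1)));
               r\<theta> = lam\<epsilon> / (a powr (p / (p - 1)) * exp ((mu (p - 1) \<theta> - \<epsilon>) * a powr (p / (p - 1))))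
           in r\<theta> * a powr (p / (p - 1)) * exp (\<eta> * a powr (p / (p - 1)))) \<longlonglongrightarrow> 0)
    \<and> (\<lambda>n. let \<epsilon> = e n; a = u \<epsilon> 0;
               lam\<epsilon> = integral\<^sup>L (lam \<theta> R) (\<lambda>r. exp ((mu (p - 1) \<theta> - \<epsilon>) * u \<epsilon> r powr (p / (p - 1)))
                                           * u \<epsilon> r powr (p / (p - 1)))
           in lam\<epsilon> / (a powr (p / (p - 1)) * exp ((mu (p - 1) \<theta> - \<epsilon>) * a powr (p / (p - 1))))) \<longlonglongrightarrow> 0"
proof -
  define \<mu> where "\<mu> = mu (p - 1) \<theta>"
  define q where "q = p / (p - 1)"
  define v where "v n = u (e n)" for n
  have e: "0 < e n" "e n < \<mu>" for n
    using he by (auto simp: \<mu>_def)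
  have "1 < q" using hp by (simp add: q_def)
  interpret concentrating_sequence "lam \<theta> R" v "\<lambda>n. v n 0" "\<lambda>n. \<mu> - e n" \<mu> q
  proof (rule concentrating_sequence.intro)
    show "finite_measure (lam \<theta> R)"
      using hmax[of "e 0"] hSfin[of "e 0"] e[of 0]
      by (intro finite_measure_if_finite_nn_integral_ge_1
          [where f = "\<lambda>r. ennreal (exp ((\<mu> - e 0) * \<bar>v 0 r\<bar> powr q))"])
        (auto simp: \<mu>_def v_def q_def ennreal_leI)
    show "v n \<in> borel_measurable (lam \<theta> R)" for n
    proof -
      obtain v' where "\<forall>r\<in>{0..R}. (v n has_real_derivative v' r) (at r within {0..R})"
        using hC1[of "e n"] e by (auto simp: v_def \<mu>_def)
      then show ?thesis by (blast intro: borel_measurable_lam_if_continuous DERIV_continuous_on)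
    qed
    show "0 \<le> v n r \<and> v n r \<le> v n 0" if "r \<in> space (lam \<theta> R)" for n r
      using that hnonneg[of "e n" r] hnoninc[of "e n" 0 r] e by (auto simp: v_def \<mu>_def)
    show "filterlim (\<lambda>n. v n 0) at_top sequentially"
      using hblow by (simp add: v_def)
    show "(\<lambda>n. \<mu> - e n) \<longlonglongrightarrow> \<mu>"
      using tendsto_diff[OF tendsto_const he(3), of \<mu>] by simp
    show "0 < \<mu>" "0 < q" using e[of 0] \<open>1 < q\<close> by auto
    show "(\<lambda>n. \<integral>r. \<bar>v n r\<bar> powr q \<partial>lam \<theta> R) \<longlonglongrightarrow> 0"
      using hLq[OF \<open>1 < q\<close>] by (simp add: Lpow_def v_def)
    show "\<exists>B\<ge>0. \<forall>n. (\<integral>\<^sup>+r. ennreal (exp (c * \<bar>v n r\<bar> powr q)) \<partial>lam \<theta> R) \<le> ennreal B"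
      if "0 < c" "c < \<mu>" for c
      using exp_integrals_bounded_by_S[of v p \<theta> R \<nu> c] hX hH hSfin[of "\<mu> - c"] e that
      by (simp add: v_def \<mu>_def q_def)
  qed
  show ?thesis
    using scale_mult_exp_tendsto_zero scale_tendsto_zero
    unfolding blowup_scale_def Let_def \<mu>_def q_def v_def by simp
qed

end
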